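(* Let $m\ge2$ and let $G:\mathbb{R}^{m(m-1)/2}\to\mathbb{S}^m$ be defined by $G(x)=I+\sum_{1\le i<j\le m}A^{ij}x_{ij}$, where the components of $x$ are indexed by pairs $(i,j)$ with $1\le i<j\le m$. Then every $x$ with $G(x)\in\mathbb{S}^m_+$ is nondegenerate, i.e. $$\mathbb{S}^m=\operatorname{lin}\mathcal{T}_{\mathbb{S}^m_+}(G(x))+\operatorname{Im}\nabla G(x).$$
   Context: $\mathbb{S}^m$ is the space of real symmetric $m\times m$ matrices and $\mathbb{S}^m_+$ the cone of positive semidefinite ones. $A^{ij}$ denotes the $m\times m$ matrix with $1$ in the $(i,j)$ and $(j,i)$ entries and $0$ elsewhere. $\mathcal{T}_{\mathbb{S}^m_+}(Y)$ is the tangent cone of $\mathbb{S}^m_+$ at $Y$, $\operatorname{lin}K=K\cap(-K)$ is the lineality space of a cone $K$, and $\operatorname{Im}\nabla G(x)$ is the image of the derivative $\nabla G(x):\mathbb{R}^{m(m-1)/2}\to\mathbb{S}^m$, $v\mapsto\sum_{i<j}v_{ij}A^{ij}$. (This is the constraint of the closest correlation matrix problem: minimize $\sum_{i<j}(H_{ij}-x_{ij})^2$ subject to $G(x)\in\mathbb{S}^m_+$, for a given symmetric $H$.) *)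

theory Defs
  imports "HOL-Analysis.Analysis"
begin

text \<open>Matrices indexed by a finite linearly ordered type 'n, with m = CARD('n).\<close>

definition sym_mats :: "(real^'n::finite^'n) set" where
  "sym_mats = {A. transpose A = A}"

definition psd_cone :: "(real^'n::finite^'n) set" where
  "psd_cone = {A. transpose A = A \<and> (\<forall>v::real^'n. 0 \<le> v \<bullet> (A *v v))}"

definition tangent_cone :: "'a::real_normed_vector set \<Rightarrow> 'a \<Rightarrow> 'a set" where
  "tangent_cone K y = {d. \<exists>t u. (\<forall>k. 0 < t k) \<and> t \<longlonglongrightarrow> 0 \<and> u \<longlonglongrightarrow> d
                           \<and> (\<forall>k. y + t k *\<^sub>R u k \<in> K)}"

definition lineality :: "'a::ab_group_add set \<Rightarrow> 'a set" where
  "lineality K = K \<inter> uminus ` K"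

definition Aij :: "'n \<Rightarrow> 'n \<Rightarrow> real^'n^'n" where
  "Aij i j = (\<chi> k l. if (k = i \<and> l = j) \<or> (k = j \<and> l = i) then 1 else 0)"

definition upper_pairs :: "('n::linorder \<times> 'n) set" where
  "upper_pairs = {(i, j). i < j}"

text \<open>x has components x (i,j) for i < j (other values are ignored).\<close>
definition corrG :: "('n \<times> 'n \<Rightarrow> real) \<Rightarrow> ((real, 'n::{finite,linorder}) vec, 'n) vec" where
  "corrG x = mat 1 + (\<Sum>p\<in>upper_pairs. x p *\<^sub>R Aij (fst p) (snd p))"

text \<open>Derivative of corrG at any point: v \<mapsto> sum of v_ij A^ij.\<close>
definition DcorrG :: "('n \<times> 'n \<Rightarrow> real) \<Rightarrow> ('n \<times> 'n \<Rightarrow> real) \<Rightarrow> ((real, 'n::{finite,linorder}) vec, 'n) vec" where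
  "DcorrG x v = (\<Sum>p\<in>upper_pairs. v p *\<^sub>R Aij (fst p) (snd p))"

end

theory Submission
  imports Defs
begin

text \<open>For every matrix B, the curve t \<mapsto> (I + t B)' Y (I + t B) stays in the PSD cone and
  passes through Y with velocity Y B + B' Y; together with -B this puts Y B + B' Y into the
  lineality space of the tangent cone at Y. Since G(x) has unit diagonal, a diagonal B with entries
  S(i,i)/2 reproduces the diagonal of any symmetric S, and the symmetric zero-diagonal remainder is
  exactly an element of the image of the derivative of G.\<close>

lemma matrix_transpose_add: "transpose ((A::'a::semiring_1^'n^'m) + B) = transpose A + transpose B"
  by (simp add: transpose_def vec_eq_iff)

lemma matrix_add_rdistrib: "((A::'a::semiring_1^'n^'m) + B) ** C = A ** C + B ** C"
  by (vector matrix_matrix_mult_def sum.distrib[symmetric] field_simps)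

lemma subspace_sym_mats: "subspace sym_mats"
  by (auto simp: subspace_def sym_mats_def matrix_transpose_add transpose_scalar)
     (simp add: transpose_def vec_eq_iff)

lemma psd_cone_subset_sym_mats: "psd_cone \<subseteq> sym_mats"
  by (auto simp: psd_cone_def sym_mats_def)

lemma tangent_cone_subset_subspace:
  fixes S :: "'a::euclidean_space set"
  assumes "subspace S" and "K \<subseteq> S" and "y \<in> S"
  shows "tangent_cone K y \<subseteq> S"
proof
  fix d assume "d \<in> tangent_cone K y"
  then obtain t u where t: "\<And>k. 0 < t k" and u: "u \<longlonglongrightarrow> d" and K: "\<And>k. y + t k *\<^sub>R u k \<in> K"
    unfolding tangent_cone_def by blast
  have "u k = (1 / t k) *\<^sub>R ((y + t k *\<^sub>R u k) - y)" for k
    using t[of k] by simp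
  moreover have "(1 / t k) *\<^sub>R ((y + t k *\<^sub>R u k) - y) \<in> S" for k
    using assms K[of k] by (blast intro: subspace_scale subspace_diff)
  ultimately have "u k \<in> S" for k by simp
  then show "d \<in> S"
    using closed_sequentially[OF closed_subspace[OF assms(1)] _ u] by blast
qed

lemma psd_cone_congruence:
  fixes Y M :: "real^'n^'n"
  assumes "Y \<in> psd_cone"
  shows "transpose M ** Y ** M \<in> psd_cone"
proof -
  have "transpose Y = Y" using assms by (simp add: psd_cone_def)
  then have "transpose (transpose M ** Y ** M) = transpose M ** Y ** M"
    by (simp add: matrix_transpose_mul matrix_mul_assoc)
  moreover have "v \<bullet> ((transpose M ** Y ** M) *v v) = (M *v v) \<bullet> (Y *v (M *v v))" for v
    by (metis dot_lmul_matrix matrix_vector_mul_assoc vector_transpose_matrix)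
  ultimately show ?thesis using assms by (simp add: psd_cone_def)
qed

lemma congruence_expansion:
  fixes Y B :: "real^'n^'n"
  shows "transpose (mat 1 + t *\<^sub>R B) ** Y ** (mat 1 + t *\<^sub>R B)
     = Y + t *\<^sub>R (Y ** B + transpose B ** Y + t *\<^sub>R (transpose B ** Y ** B))"
  by (simp add: matrix_transpose_add transpose_scalar matrix_add_ldistrib matrix_add_rdistrib
      matrix_scalar_ac scalar_matrix_assoc[symmetric] matrix_mul_assoc algebra_simps)

lemma tangent_cone_psd_congruence:
  fixes Y B :: "real^'n^'n"
  assumes "Y \<in> psd_cone"
  shows "Y ** B + transpose B ** Y \<in> tangent_cone psd_cone Y"
proof -
  define t where "t k = 1 / (real k + 1)" for k :: nat
  define u where "u k = Y ** B + transpose B ** Y + t k *\<^sub>R (transpose B ** Y ** B)" for k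
  have "t \<longlonglongrightarrow> 0"
    unfolding t_def using LIMSEQ_Suc[OF lim_inverse_n'] by (simp add: add.commute)
  then have "u \<longlonglongrightarrow> Y ** B + transpose B ** Y + 0 *\<^sub>R (transpose B ** Y ** B)"
    unfolding u_def by (intro tendsto_intros)
  moreover have "Y + t k *\<^sub>R u k \<in> psd_cone" for k
    using psd_cone_congruence[OF assms] by (simp add: u_def congruence_expansion[symmetric])
  moreover have "0 < t k" for k by (simp add: t_def)
  ultimately show ?thesis
    unfolding tangent_cone_def using \<open>t \<longlonglongrightarrow> 0\<close> by auto
qed

lemma lineality_tangent_cone_psd_congruence:
  fixes Y B :: "real^'n^'n"
  assumes "Y \<in> psd_cone"
  shows "Y ** B + transpose B ** Y \<in> lineality (tangent_cone psd_cone Y)"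
proof -
  have "- (Y ** B + transpose B ** Y) = Y ** (- B) + transpose (- B) ** Y"
    by (simp add: vec_eq_iff matrix_matrix_mult_def transpose_def sum_negf)
  then have "- (Y ** B + transpose B ** Y) \<in> tangent_cone psd_cone Y"
    using tangent_cone_psd_congruence[OF assms] by metis
  then show ?thesis
    unfolding lineality_def using tangent_cone_psd_congruence[OF assms]
    by (auto intro: image_eqI[where x = "- (Y ** B + transpose B ** Y)"])
qed

lemma Aij_nth: "Aij i j $ k $ l = (if (i, j) = (k, l) \<or> (i, j) = (l, k) then 1 else 0)"
  by (auto simp: Aij_def)

lemma upper_pairs_Int_transpositions:
  "upper_pairs \<inter> {(k, l), (l, k)} = (if k < l then {(k, l)} else if l < k then {(l, k)} else {})"
  by (auto simp: upper_pairs_def)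

lemma DcorrG_nth:
  fixes v :: "'n::{finite,linorder} \<times> 'n \<Rightarrow> real"
  shows "DcorrG x v $ k $ l = (if k < l then v (k, l) else if l < k then v (l, k) else 0)"
proof -
  have "DcorrG x v $ k $ l = (\<Sum>p\<in>upper_pairs. if p \<in> {(k, l), (l, k)} then v p else 0)"
    unfolding DcorrG_def sum_component
    by (simp add: Aij_nth if_distrib[of "(*) _"] prod_eq_iff cong: if_cong)
  also have "\<dots> = sum v (upper_pairs \<inter> {(k, l), (l, k)})"
    by (simp add: sum.inter_restrict)
  finally show ?thesis
    by (simp add: upper_pairs_Int_transpositions)
qed

lemma corrG_eq_DcorrG: "corrG x = mat 1 + DcorrG x x"
  unfolding corrG_def DcorrG_def ..

lemma corrG_diag: "corrG x $ i $ i = 1"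
  unfolding corrG_eq_DcorrG by (simp add: DcorrG_nth mat_def)

lemma range_DcorrG:
  fixes x :: "'n::{finite,linorder} \<times> 'n \<Rightarrow> real"
  shows "range (DcorrG x) = {b \<in> sym_mats. \<forall>i. b $ i $ i = 0}"
proof (intro set_eqI iffI)
  fix b assume "b \<in> range (DcorrG x)"
  then show "b \<in> {b \<in> sym_mats. \<forall>i. b $ i $ i = 0}"
    by (auto simp: sym_mats_def vec_eq_iff transpose_def DcorrG_nth)
next
  fix b :: "((real, 'n) vec, 'n) vec" assume "b \<in> {b \<in> sym_mats. \<forall>i. b $ i $ i = 0}"
  then have "b $ l $ k = b $ k $ l" "b $ k $ k = 0" for k l
    by (auto simp: sym_mats_def vec_eq_iff transpose_def dest: spec)
  then have "DcorrG x (\<lambda>p. b $ fst p $ snd p) = b"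
    by (auto simp: vec_eq_iff DcorrG_nth)
  then show "b \<in> range (DcorrG x)" by (metis rangeI)
qed

definition diag_mat :: "('n \<Rightarrow> 'a::zero) \<Rightarrow> 'a^'n^'n" where
  "diag_mat d = (\<chi> i j. if i = j then d i else 0)"

lemma diag_of_congruence_diag_mat:
  fixes Y :: "real^'n^'n"
  shows "(Y ** diag_mat d + transpose (diag_mat d) ** Y) $ i $ i = 2 * Y $ i $ i * d i"
  by (simp add: diag_mat_def matrix_matrix_mult_def transpose_def if_distrib if_distribR
      sum.delta cong: if_cong)

theorem proposition5p2:
  fixes x :: "'n::{finite,linorder} \<times> 'n \<Rightarrow> real"
  assumes "CARD('n) \<ge> 2"
    and "corrG x \<in> psd_cone"
  shows "sym_mats =
         {a + b | a b. a \<in> lineality (tangent_cone psd_cone (corrG x)) \<and> b \<in> range (DcorrG x)}"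
    (is "_ = ?sum")
proof -
  define Y where "Y = corrG x"
  have lin_sym: "lineality (tangent_cone psd_cone Y) \<subseteq> sym_mats"
    using tangent_cone_subset_subspace[OF subspace_sym_mats psd_cone_subset_sym_mats]
      psd_cone_subset_sym_mats assms(2)
    unfolding lineality_def Y_def by blast
  have "S \<in> ?sum" if S: "S \<in> sym_mats" for S
  proof -
    define D where "D = diag_mat (\<lambda>i. S $ i $ i / 2)"
    define H where "H = Y ** D + transpose D ** Y"
    have H: "H \<in> lineality (tangent_cone psd_cone Y)"
      unfolding H_def using lineality_tangent_cone_psd_congruence assms(2) Y_def by blast
    have "H $ i $ i = S $ i $ i" for i
      unfolding H_def D_def diag_of_congruence_diag_mat Y_def corrG_diag by simp
    then have "S - H \<in> range (DcorrG x)"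
      using S H lin_sym subspace_diff[OF subspace_sym_mats] by (auto simp: range_DcorrG)
    moreover have "S = H + (S - H)" by simp
    ultimately show ?thesis using H unfolding Y_def by blast
  qed
  moreover have "?sum \<subseteq> sym_mats"
    using lin_sym subspace_add[OF subspace_sym_mats] unfolding range_DcorrG Y_def by blast
  ultimately show ?thesis by blast
qed

end
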